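(* Let $f:\mathbb{R}^n\to[-1,1]$ be a $C$-Lipschitz function, $\kappa>0$, and let $g:\mathbb{R}^n\to[-1,1]$ be a $W$-junta with $\mathbf{E}_{x\sim\gamma_n}[|f(x)-g(x)|]\le\kappa$. Then there is a $C$-Lipschitz $W$-junta $f_W:\mathbb{R}^n\to[-1,1]$ with $\mathbf{E}_{x\sim\gamma_n}[|f(x)-f_W(x)|]\le2\kappa$.
   Context: $\gamma_n$ is the standard Gaussian measure; $W$ is a linear subspace of $\mathbb{R}^n$; a function is a $W$-junta if it depends on $x$ only through the orthogonal projection of $x$ onto $W$. Lipschitz is with respect to the Euclidean norm. *)

theory Defs
  imports "HOL-Probability.Probability"
begin

definition std_gaussian :: "('a::euclidean_space) measure" where
  "std_gaussian = density lborel
     (\<lambda>x. ennreal ((2 * pi) powr (- real DIM('a) / 2) * exp (- (norm x)\<^sup>2 / 2)))"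

definition orth_proj :: "('a::euclidean_space) set \<Rightarrow> 'a \<Rightarrow> 'a" where
  "orth_proj W x = (THE p. p \<in> W \<and> (\<forall>w\<in>W. (x - p) \<bullet> w = 0))"

definition is_junta :: "('a::euclidean_space) set \<Rightarrow> ('a \<Rightarrow> 'b) \<Rightarrow> bool" where
  "is_junta W g \<longleftrightarrow> (\<exists>h. \<forall>x. g x = h (orth_proj W x))"

end

theory Submission imports Defs begin

text \<open>Let \<open>P\<close> be the orthogonal projection onto \<open>W\<close> and \<open>Q = id - P\<close>. The map
  \<open>(x, y) \<mapsto> (P x - Q y, Q x + P y)\<close> is an orthogonal transformation of \<open>\<real>\<^sup>n \<times> \<real>\<^sup>n\<close>,
  so for independent standard Gaussian \<open>x\<close>, \<open>y\<close> the vector \<open>P x - Q y\<close> is again standard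
  Gaussian. As \<open>g\<close> is a \<open>W\<close>-junta, \<open>g (P x - Q y) = g x\<close>, hence averaging over \<open>y\<close>,
  \<open>E\<^sub>y E\<^sub>x \<bar>f (P x - Q y) - g x\<bar> = E \<bar>f - g\<bar> \<le> \<kappa>\<close>. Fix \<open>y\<close> with
  \<open>E\<^sub>x \<bar>f (P x - Q y) - g x\<bar> \<le> \<kappa>\<close>; then \<open>f\<^sub>W x = f (P x - Q y)\<close> is a \<open>W\<close>-junta, is
  \<open>C\<close>-Lipschitz because \<open>P\<close> is 1-Lipschitz, and is \<open>2\<kappa>\<close>-close to \<open>f\<close> by the triangle
  inequality.\<close>

lemma orth_proj_eq:
  fixes W :: "'a::euclidean_space set"
  assumes "subspace W" "p \<in> W" "\<And>w. w \<in> W \<Longrightarrow> (x - p) \<bullet> w = 0"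
  shows "orth_proj W x = p"
  unfolding orth_proj_def
proof (rule the_equality)
  show "p \<in> W \<and> (\<forall>w\<in>W. (x - p) \<bullet> w = 0)" using assms by blast
  fix q assume q: "q \<in> W \<and> (\<forall>w\<in>W. (x - q) \<bullet> w = 0)"
  have "q - p \<in> W" using assms q by (simp add: subspace_diff)
  then have "(q - p) \<bullet> (q - p) = (x - p) \<bullet> (q - p) - (x - q) \<bullet> (q - p)"
    by (simp add: inner_diff_left)
  also have "\<dots> = 0" using assms(3) q \<open>q - p \<in> W\<close> by simp
  finally show "q = p" by simp
qed

lemma
  fixes W :: "'a::euclidean_space set"
  assumes "subspace W"
  shows orth_proj_in: "orth_proj W x \<in> W"
    and orth_proj_orthogonal: "w \<in> W \<Longrightarrow> (x - orth_proj W x) \<bullet> w = 0"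
proof -
  obtain p q where "p \<in> span W" "\<And>w. w \<in> span W \<Longrightarrow> orthogonal q w" "x = p + q"
    using orthogonal_subspace_decomp_exists[of W x] by metis
  then have "p \<in> W" "\<And>w. w \<in> W \<Longrightarrow> (x - p) \<bullet> w = 0"
    using assms by (auto simp: span_eq_iff[THEN iffD2, OF assms] orthogonal_def)
  with assms have "orth_proj W x = p" by (rule orth_proj_eq)
  with \<open>p \<in> W\<close> \<open>\<And>w. w \<in> W \<Longrightarrow> (x - p) \<bullet> w = 0\<close>
  show "orth_proj W x \<in> W" "w \<in> W \<Longrightarrow> (x - orth_proj W x) \<bullet> w = 0" by auto
qed

lemma linear_orth_proj:
  fixes W :: "'a::euclidean_space set"
  assumes "subspace W"
  shows "linear (orth_proj W)"
proof
  fix x y :: 'a and c :: real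
  have "(x + y - (orth_proj W x + orth_proj W y)) \<bullet> w = 0" if "w \<in> W" for w
    using assms that orth_proj_orthogonal[where x=x] orth_proj_orthogonal[where x=y]
    by (simp add: algebra_simps inner_diff_left inner_add_left)
  then show "orth_proj W (x + y) = orth_proj W x + orth_proj W y"
    using assms by (intro orth_proj_eq) (auto simp: subspace_add orth_proj_in)
  show "orth_proj W (c *\<^sub>R x) = c *\<^sub>R orth_proj W x"
    using assms by (intro orth_proj_eq)
      (auto simp: subspace_scale orth_proj_in orth_proj_orthogonal
        simp flip: scaleR_diff_right)
qed

lemma orth_proj_idem:
  fixes W :: "'a::euclidean_space set"
  assumes "subspace W"
  shows "orth_proj W (orth_proj W x) = orth_proj W x"
  using assms by (intro orth_proj_eq) (auto simp: orth_proj_in)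

lemma orth_proj_diff_self:
  fixes W :: "'a::euclidean_space set"
  assumes "subspace W"
  shows "orth_proj W (x - orth_proj W x) = 0"
  using assms by (simp add: linear_diff[OF linear_orth_proj] orth_proj_idem)

lemma inner_orth_proj_diff_self:
  fixes W :: "'a::euclidean_space set"
  assumes "subspace W"
  shows "orth_proj W x \<bullet> (y - orth_proj W y) = 0"
  using orth_proj_orthogonal[OF assms orth_proj_in[OF assms]] by (simp add: inner_commute)

lemma norm_orth_proj_pythagoras:
  fixes W :: "'a::euclidean_space set"
  assumes "subspace W"
  shows "(norm x)\<^sup>2 = (norm (orth_proj W x))\<^sup>2 + (norm (x - orth_proj W x))\<^sup>2"
proof -
  have "x = orth_proj W x + (x - orth_proj W x)" by simp
  then show ?thesis
    using inner_orth_proj_diff_self[OF assms, of x x]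
    by (metis norm_add_Pythagorean orthogonal_def)
qed

lemma norm_orth_proj_le:
  fixes W :: "'a::euclidean_space set"
  assumes "subspace W"
  shows "norm (orth_proj W x) \<le> norm x"
  using norm_orth_proj_pythagoras[OF assms, of x]
  by (simp add: power2_le_imp_le)

lemma borel_measurable_orth_proj [measurable]:
  fixes W :: "'a::euclidean_space set"
  assumes "subspace W"
  shows "orth_proj W \<in> borel_measurable borel"
  using assms
  by (intro borel_measurable_continuous_onI linear_continuous_on)
    (simp add: linear_conv_bounded_linear[symmetric] linear_orth_proj)

lemma norm_orth_proj_rotation:
  fixes W :: "'a::euclidean_space set"
  assumes W: "subspace W"
  defines "P \<equiv> orth_proj W"
  shows "(norm (P x - (y - P y)))\<^sup>2 + (norm ((x - P x) + P y))\<^sup>2 = (norm x)\<^sup>2 + (norm y)\<^sup>2"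
proof -
  have "(norm (P x - (y - P y)))\<^sup>2 = (norm (P x))\<^sup>2 + (norm (y - P y))\<^sup>2"
    using inner_orth_proj_diff_self[OF W, of x y]
    by (simp add: P_def power2_norm_eq_inner inner_diff_left inner_diff_right inner_commute)
  moreover have "(norm ((x - P x) + P y))\<^sup>2 = (norm (x - P x))\<^sup>2 + (norm (P y))\<^sup>2"
    using inner_orth_proj_diff_self[OF W, of y x]
    by (simp add: P_def power2_norm_eq_inner inner_add_left inner_add_right inner_commute)
  ultimately show ?thesis
    using norm_orth_proj_pythagoras[OF W, of x] norm_orth_proj_pythagoras[OF W, of y]
    by (simp add: P_def)
qed

lemma is_junta_orth_proj_eq:
  fixes W :: "'a::euclidean_space set"
  assumes "subspace W" "is_junta W g"
  shows "g (orth_proj W x) = g x"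
  using assms orth_proj_idem[OF assms(1)] unfolding is_junta_def by metis

lemma lipschitz_on_orth_proj_shift:
  fixes W :: "'a::euclidean_space set"
  assumes "subspace W" "C-lipschitz_on UNIV f"
  shows "C-lipschitz_on UNIV (\<lambda>x. f (orth_proj W x - c))"
proof -
  have "1-lipschitz_on UNIV (\<lambda>x. orth_proj W x - c)"
    using assms norm_orth_proj_le[OF assms(1)]
    by (intro lipschitz_onI) (auto simp: dist_norm simp flip: linear_diff[OF linear_orth_proj])
  then show ?thesis
    using lipschitz_on_compose2[of 1 UNIV _ C f] lipschitz_on_subset[OF assms(2)] by simp
qed

lemma nn_integral_lborel_translate:
  fixes F :: "'a::euclidean_space \<Rightarrow> ennreal"
  assumes [measurable]: "F \<in> borel_measurable borel"
  shows "(\<integral>\<^sup>+y. F (y + t) \<partial>lborel) = (\<integral>\<^sup>+y. F y \<partial>lborel)"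
proof -
  have "(\<integral>\<^sup>+y. F y \<partial>lborel) = (\<integral>\<^sup>+y. F y \<partial>distr lborel borel ((+) t))"
    by (simp add: lborel_distr_plus)
  also have "\<dots> = (\<integral>\<^sup>+y. F (t + y) \<partial>lborel)"
    by (simp add: nn_integral_distr)
  finally show ?thesis by (simp add: add.commute)
qed

lemma nn_integral_lborel_shear_snd:
  fixes F :: "'a::euclidean_space \<times> 'b::euclidean_space \<Rightarrow> ennreal"
  assumes [measurable]: "F \<in> borel_measurable (borel \<Otimes>\<^sub>M borel)"
  shows "(\<integral>\<^sup>+x. \<integral>\<^sup>+y. F (x, y + L x) \<partial>lborel \<partial>lborel) = (\<integral>\<^sup>+x. \<integral>\<^sup>+y. F (x, y) \<partial>lborel \<partial>lborel)"
  by (intro nn_integral_cong nn_integral_lborel_translate) measurable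

lemma nn_integral_lborel_shear_fst:
  fixes F :: "'a::euclidean_space \<times> 'b::euclidean_space \<Rightarrow> ennreal"
  assumes [measurable]: "F \<in> borel_measurable (borel \<Otimes>\<^sub>M borel)" "L \<in> borel_measurable borel"
  shows "(\<integral>\<^sup>+x. \<integral>\<^sup>+y. F (x + L y, y) \<partial>lborel \<partial>lborel) = (\<integral>\<^sup>+x. \<integral>\<^sup>+y. F (x, y) \<partial>lborel \<partial>lborel)"
proof -
  have "(\<integral>\<^sup>+x. \<integral>\<^sup>+y. F (x + L y, y) \<partial>lborel \<partial>lborel) = (\<integral>\<^sup>+y. \<integral>\<^sup>+x. F (x + L y, y) \<partial>lborel \<partial>lborel)"
    by (rule lborel_pair.Fubini') measurable
  also have "\<dots> = (\<integral>\<^sup>+y. \<integral>\<^sup>+x. F (x, y) \<partial>lborel \<partial>lborel)"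
    by (intro nn_integral_cong nn_integral_lborel_translate) measurable
  also have "\<dots> = (\<integral>\<^sup>+x. \<integral>\<^sup>+y. F (x, y) \<partial>lborel \<partial>lborel)"
    by (rule lborel_pair.Fubini'[symmetric]) measurable
  finally show ?thesis .
qed

text \<open>The rotation \<open>(x, y) \<mapsto> (P x - Q y, Q x + P y)\<close> is the composition of the three shears
  \<open>(x, y) \<mapsto> (x - Q y, y)\<close>, \<open>(x, y) \<mapsto> (x, y + Q x)\<close> and \<open>(x, y) \<mapsto> (x - Q y, y)\<close>.\<close>
lemma nn_integral_lborel_orth_proj_rotation:
  fixes W :: "'a::euclidean_space set" and F :: "'a \<times> 'a \<Rightarrow> ennreal"
  assumes W: "subspace W" and [measurable]: "F \<in> borel_measurable (borel \<Otimes>\<^sub>M borel)"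
  defines "P \<equiv> orth_proj W"
  shows "(\<integral>\<^sup>+x. \<integral>\<^sup>+y. F (P x - (y - P y), (x - P x) + P y) \<partial>lborel \<partial>lborel)
       = (\<integral>\<^sup>+x. \<integral>\<^sup>+y. F (x, y) \<partial>lborel \<partial>lborel)"
proof -
  define Q where "Q y = y - P y" for y
  have [measurable]: "P \<in> borel_measurable borel" "Q \<in> borel_measurable borel"
    using W unfolding P_def Q_def[abs_def] by measurable
  have P_add: "P (a + b) = P a + P b" and P_diff: "P (a - b) = P a - P b"
    and P_idem: "P (P a) = P a" for a b
    using linear_orth_proj[OF W] orth_proj_idem[OF W] by (simp_all add: P_def linear_add linear_diff)
  define F1 where "F1 z = F (fst z - Q (snd z), snd z)" for z
  define F2 where "F2 z = F1 (fst z, snd z + Q (fst z))" for z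
  have [measurable]: "F1 \<in> borel_measurable (borel \<Otimes>\<^sub>M borel)" "F2 \<in> borel_measurable (borel \<Otimes>\<^sub>M borel)"
    unfolding F1_def[abs_def] F2_def[abs_def] by measurable
  have "F (P x - (y - P y), (x - P x) + P y) = F2 (x - Q y, y)" for x y
  proof -
    have "y + Q (x - Q y) = (x - P x) + P y" "x - Q y - Q (y + Q (x - Q y)) = P x - (y - P y)"
      by (simp_all add: Q_def P_add P_diff P_idem algebra_simps)
    then show ?thesis by (simp add: F1_def F2_def)
  qed
  then have "(\<integral>\<^sup>+x. \<integral>\<^sup>+y. F (P x - (y - P y), (x - P x) + P y) \<partial>lborel \<partial>lborel)
      = (\<integral>\<^sup>+x. \<integral>\<^sup>+y. F2 (x + - Q y, y) \<partial>lborel \<partial>lborel)"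
    by simp
  also have "\<dots> = (\<integral>\<^sup>+x. \<integral>\<^sup>+y. F1 (x, y + Q x) \<partial>lborel \<partial>lborel)"
    by (subst nn_integral_lborel_shear_fst) (simp_all add: F2_def)
  also have "\<dots> = (\<integral>\<^sup>+x. \<integral>\<^sup>+y. F (x + - Q y, y) \<partial>lborel \<partial>lborel)"
    by (subst nn_integral_lborel_shear_snd) (simp_all add: F1_def)
  also have "\<dots> = (\<integral>\<^sup>+x. \<integral>\<^sup>+y. F (x, y) \<partial>lborel \<partial>lborel)"
    by (rule nn_integral_lborel_shear_fst) measurable
  finally show ?thesis .
qed

definition std_gaussian_density :: "'a::euclidean_space \<Rightarrow> real" where
  "std_gaussian_density x = (2 * pi) powr (- real DIM('a) / 2) * exp (- (norm x)\<^sup>2 / 2)"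

lemma std_gaussian_density_nonneg: "std_gaussian_density x \<ge> 0"
  by (simp add: std_gaussian_density_def)

lemma borel_measurable_std_gaussian_density [measurable]:
  "std_gaussian_density \<in> borel_measurable borel"
  unfolding std_gaussian_density_def[abs_def] by measurable

lemma std_gaussian_eq_density:
  "std_gaussian = density lborel (\<lambda>x. ennreal (std_gaussian_density x))"
  unfolding std_gaussian_def std_gaussian_density_def ..

lemma sets_std_gaussian [measurable_cong, simp]: "sets std_gaussian = sets borel"
  by (simp add: std_gaussian_def)

lemma std_gaussian_density_eq_prod:
  "std_gaussian_density (x::'a::euclidean_space) = (\<Prod>b\<in>Basis. std_normal_density (x \<bullet> b))"
proof -
  have "(\<Prod>b\<in>Basis. std_normal_density (x \<bullet> b))
      = (\<Prod>b\<in>(Basis::'a set). 1 / sqrt (2 * pi)) * (\<Prod>b\<in>Basis. exp (- (x \<bullet> b)\<^sup>2 / 2))"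
    by (simp only: std_normal_density_def prod.distrib)
  also have "(\<Prod>b\<in>(Basis::'a set). 1 / sqrt (2 * pi)) = (2 * pi) powr (- real DIM('a) / 2)"
  proof -
    have "1 / sqrt (2 * pi) = (2 * pi) powr (-1/2)"
      by (simp add: powr_half_sqrt[symmetric] powr_minus_divide)
    then show ?thesis
      by (simp add: powr_realpow[symmetric] powr_powr)
  qed
  also have "(\<Prod>b\<in>Basis. exp (- (x \<bullet> b)\<^sup>2 / 2)) = exp (- (norm x)\<^sup>2 / 2)"
  proof -
    have "(norm x)\<^sup>2 = (\<Sum>b\<in>Basis. (x \<bullet> b)\<^sup>2)"
      unfolding power2_norm_eq_inner by (subst euclidean_inner) (simp add: power2_eq_square)
    then show ?thesis
      by (simp add: exp_sum[symmetric] sum_negf sum_divide_distrib[symmetric])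
  qed
  finally show ?thesis by (simp add: std_gaussian_density_def)
qed

lemma nn_integral_std_gaussian_density:
  "(\<integral>\<^sup>+x. ennreal (std_gaussian_density (x::'a::euclidean_space)) \<partial>lborel) = 1"
  unfolding std_gaussian_density_eq_prod
  by (subst prod_ennreal[symmetric], simp,
      subst nn_integral_lborel_prod[where f="\<lambda>b x. ennreal (std_normal_density x)"])
    (auto simp: nn_integral_eq_integral)

lemma prob_space_std_gaussian: "prob_space (std_gaussian :: 'a::euclidean_space measure)"
  by (rule prob_spaceI)
    (simp add: std_gaussian_eq_density emeasure_density nn_integral_std_gaussian_density)

lemma std_gaussian_density_mult_eq:
  fixes u v x y :: "'a::euclidean_space"
  assumes "(norm u)\<^sup>2 + (norm v)\<^sup>2 = (norm x)\<^sup>2 + (norm y)\<^sup>2"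
  shows "std_gaussian_density u * std_gaussian_density v
       = std_gaussian_density x * std_gaussian_density y"
proof -
  have "exp (- (norm u)\<^sup>2 / 2) * exp (- (norm v)\<^sup>2 / 2) = exp (- (norm x)\<^sup>2 / 2) * exp (- (norm y)\<^sup>2 / 2)"
    using assms by (simp flip: exp_add add_divide_distrib)
  then show ?thesis by (simp add: std_gaussian_density_def mult_ac)
qed

lemma nn_integral_std_gaussian:
  assumes "F \<in> borel_measurable borel"
  shows "(\<integral>\<^sup>+x. F x \<partial>std_gaussian) = (\<integral>\<^sup>+x. ennreal (std_gaussian_density x) * F x \<partial>lborel)"
  unfolding std_gaussian_eq_density using assms by (intro nn_integral_density) auto

lemma nn_integral_std_gaussian_orth_proj_mix:
  fixes W :: "'a::euclidean_space set" and H :: "'a \<Rightarrow> ennreal"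
  assumes W: "subspace W" and [measurable]: "H \<in> borel_measurable borel"
  defines "P \<equiv> orth_proj W"
  shows "(\<integral>\<^sup>+y. \<integral>\<^sup>+x. H (P x - (y - P y)) \<partial>std_gaussian \<partial>std_gaussian) = (\<integral>\<^sup>+x. H x \<partial>std_gaussian)"
proof -
  let ?d = "\<lambda>x::'a. ennreal (std_gaussian_density x)"
  have [measurable]: "P \<in> borel_measurable borel" using W unfolding P_def by measurable
  have d_rotation: "?d (P x - (y - P y)) * ?d ((x - P x) + P y) = ?d x * ?d y" for x y
    using std_gaussian_density_mult_eq[OF norm_orth_proj_rotation[OF W]]
    by (simp add: P_def std_gaussian_density_nonneg flip: ennreal_mult)
  have "(\<integral>\<^sup>+y. \<integral>\<^sup>+x. H (P x - (y - P y)) \<partial>std_gaussian \<partial>std_gaussian)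
      = (\<integral>\<^sup>+y. ?d y * (\<integral>\<^sup>+x. ?d x * H (P x - (y - P y)) \<partial>lborel) \<partial>lborel)"
    by (simp add: nn_integral_std_gaussian)
  also have "\<dots> = (\<integral>\<^sup>+y. \<integral>\<^sup>+x. ?d x * ?d y * H (P x - (y - P y)) \<partial>lborel \<partial>lborel)"
    by (simp add: nn_integral_cmult[symmetric] mult_ac)
  also have "\<dots> = (\<integral>\<^sup>+x. \<integral>\<^sup>+y. ?d x * ?d y * H (P x - (y - P y)) \<partial>lborel \<partial>lborel)"
    by (rule lborel_pair.Fubini') measurable
  also have "\<dots> = (\<integral>\<^sup>+x. \<integral>\<^sup>+y. (\<lambda>(u, v). ?d u * ?d v * H u) (P x - (y - P y), (x - P x) + P y)
                        \<partial>lborel \<partial>lborel)"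
    by (simp add: d_rotation)
  also have "\<dots> = (\<integral>\<^sup>+x. \<integral>\<^sup>+y. ?d x * ?d y * H x \<partial>lborel \<partial>lborel)"
    unfolding P_def by (subst nn_integral_lborel_orth_proj_rotation[OF W]) simp_all
  also have "\<dots> = (\<integral>\<^sup>+x. ?d x * H x * (\<integral>\<^sup>+y. ?d y \<partial>lborel) \<partial>lborel)"
    by (simp add: nn_integral_cmult[symmetric] mult_ac)
  also have "\<dots> = (\<integral>\<^sup>+x. H x \<partial>std_gaussian)"
    by (simp add: nn_integral_std_gaussian_density nn_integral_std_gaussian)
  finally show ?thesis .
qed

lemma (in prob_space) exists_le_of_nn_integral_le:
  assumes [measurable]: "\<Phi> \<in> borel_measurable M" and "(\<integral>\<^sup>+x. \<Phi> x \<partial>M) \<le> c" "c \<noteq> \<infinity>"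
  obtains x where "x \<in> space M" "\<Phi> x \<le> c"
proof -
  have "\<exists>x\<in>space M. \<Phi> x \<le> c"
  proof (rule ccontr)
    assume "\<not> (\<exists>x\<in>space M. \<Phi> x \<le> c)"
    then have gt: "\<forall>x\<in>space M. c < \<Phi> x" by (auto simp: not_le)
    have "(\<integral>\<^sup>+x. c \<partial>M) < (\<integral>\<^sup>+x. \<Phi> x \<partial>M)"
    proof (rule nn_integral_less)
      show "(\<integral>\<^sup>+x. c \<partial>M) \<noteq> \<infinity>" using \<open>c \<noteq> \<infinity>\<close> by (simp add: emeasure_space_1)
      show "AE x in M. c \<le> \<Phi> x" using gt by (simp add: AE_I2 less_imp_le)
      show "\<not> (AE x in M. \<Phi> x \<le> c)"
      proof
        assume "AE x in M. \<Phi> x \<le> c"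
        then have "AE x in M. False"
          using AE_space by eventually_elim (use gt in \<open>auto simp: not_le[symmetric]\<close>)
        then show False by simp
      qed
    qed simp_all
    with assms show False by (simp add: emeasure_space_1)
  qed
  with that show thesis by blast
qed

lemma integrable_std_gaussian_abs_diff:
  fixes f g :: "'a::euclidean_space \<Rightarrow> real"
  assumes "f \<in> borel_measurable borel" "g \<in> borel_measurable borel"
    and "\<And>x. \<bar>f x\<bar> \<le> B" "\<And>x. \<bar>g x\<bar> \<le> B"
  shows "integrable std_gaussian (\<lambda>x. \<bar>f x - g x\<bar>)"
proof -
  interpret prob_space "std_gaussian :: 'a measure" by (rule prob_space_std_gaussian)
  show ?thesis
  proof (rule integrable_const_bound[where B="B + B"])
    show "AE x in std_gaussian. norm \<bar>f x - g x\<bar> \<le> B + B"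
    proof (rule AE_I2)
      fix x
      show "norm \<bar>f x - g x\<bar> \<le> B + B"
        using assms(3)[of x] assms(4)[of x] by (simp add: abs_le_iff)
    qed
  qed (use assms(1,2) in simp)
qed

lemma integral_abs_diff_triangle:
  fixes f g h :: "'a \<Rightarrow> real"
  assumes "integrable M (\<lambda>x. \<bar>f x - g x\<bar>)" "integrable M (\<lambda>x. \<bar>g x - h x\<bar>)"
    and "integrable M (\<lambda>x. \<bar>f x - h x\<bar>)"
  shows "(\<integral>x. \<bar>f x - h x\<bar> \<partial>M) \<le> (\<integral>x. \<bar>f x - g x\<bar> \<partial>M) + (\<integral>x. \<bar>g x - h x\<bar> \<partial>M)"
proof -
  have "(\<integral>x. \<bar>f x - h x\<bar> \<partial>M) \<le> (\<integral>x. \<bar>f x - g x\<bar> + \<bar>g x - h x\<bar> \<partial>M)"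
    using assms by (intro integral_mono) auto
  also have "\<dots> = (\<integral>x. \<bar>f x - g x\<bar> \<partial>M) + (\<integral>x. \<bar>g x - h x\<bar> \<partial>M)"
    using assms by (intro Bochner_Integration.integral_add)
  finally show ?thesis .
qed

lemma exists_orth_proj_shift_close:
  fixes f g :: "'a::euclidean_space \<Rightarrow> real" and W :: "'a set"
  assumes W: "subspace W" and "is_junta W g"
    and [measurable]: "f \<in> borel_measurable borel" "g \<in> borel_measurable borel"
    and f: "\<And>x. \<bar>f x\<bar> \<le> B" and g: "\<And>x. \<bar>g x\<bar> \<le> B"
  obtains c where "(\<integral>x. \<bar>g x - f (orth_proj W x - c)\<bar> \<partial>std_gaussian) \<le> (\<integral>x. \<bar>f x - g x\<bar> \<partial>std_gaussian)"
proof -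
  interpret prob_space "std_gaussian :: 'a measure" by (rule prob_space_std_gaussian)
  define P where "P = orth_proj W"
  have [measurable]: "P \<in> borel_measurable borel" using W unfolding P_def by measurable
  have integrable: "integrable std_gaussian (\<lambda>x. \<bar>g x - f (P x - c)\<bar>)" for c
    using f g by (intro integrable_std_gaussian_abs_diff) auto
  define \<Phi> where "\<Phi> y = (\<integral>\<^sup>+x. ennreal \<bar>g x - f (P x - (y - P y))\<bar> \<partial>std_gaussian)" for y
  have "g (P x - (y - P y)) = g x" for x y
    using is_junta_orth_proj_eq[OF W \<open>is_junta W g\<close>, of "P x - (y - P y)"]
      is_junta_orth_proj_eq[OF W \<open>is_junta W g\<close>, of x]
    by (simp add: P_def linear_diff[OF linear_orth_proj[OF W]] orth_proj_idem[OF W]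
        orth_proj_diff_self[OF W])
  then have "\<Phi> y = (\<integral>\<^sup>+x. ennreal \<bar>f (P x - (y - P y)) - g (P x - (y - P y))\<bar> \<partial>std_gaussian)" for y
    by (simp add: \<Phi>_def abs_minus_commute)
  then have "(\<integral>\<^sup>+y. \<Phi> y \<partial>std_gaussian) = (\<integral>\<^sup>+x. ennreal \<bar>f x - g x\<bar> \<partial>std_gaussian)"
    using nn_integral_std_gaussian_orth_proj_mix[OF W, of "\<lambda>z. ennreal \<bar>f z - g z\<bar>"]
    by (simp add: P_def)
  also have "\<dots> = ennreal (\<integral>x. \<bar>f x - g x\<bar> \<partial>std_gaussian)"
    using f g by (intro nn_integral_eq_integral integrable_std_gaussian_abs_diff) auto
  finally have mean: "(\<integral>\<^sup>+y. \<Phi> y \<partial>std_gaussian) \<le> ennreal (\<integral>x. \<bar>f x - g x\<bar> \<partial>std_gaussian)"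
    by simp
  have "\<Phi> \<in> borel_measurable std_gaussian" unfolding \<Phi>_def by measurable
  then obtain y where "\<Phi> y \<le> ennreal (\<integral>x. \<bar>f x - g x\<bar> \<partial>std_gaussian)"
    using mean by (auto elim: exists_le_of_nn_integral_le)
  moreover have "\<Phi> y = ennreal (\<integral>x. \<bar>g x - f (P x - (y - P y))\<bar> \<partial>std_gaussian)"
    unfolding \<Phi>_def using integrable by (intro nn_integral_eq_integral) auto
  ultimately show thesis
    using that[of "y - P y"] by (simp add: P_def ennreal_le_iff)
qed

theorem lemmaA4:
  fixes f g :: "'a::euclidean_space \<Rightarrow> real" and W :: "'a set"
    and C \<kappa> :: real
  assumes "subspace W"
    and "C-lipschitz_on UNIV f"
    and "\<forall>x. f x \<in> {-1..1}"
    and "\<kappa> > 0"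
    and "\<forall>x. g x \<in> {-1..1}"
    and "is_junta W g"
    and "g \<in> borel_measurable borel"
    and "(\<integral>x. \<bar>f x - g x\<bar> \<partial>std_gaussian) \<le> \<kappa>"
  shows "\<exists>fW :: 'a \<Rightarrow> real. C-lipschitz_on UNIV fW \<and> is_junta W fW
           \<and> (\<forall>x. fW x \<in> {-1..1})
           \<and> (\<integral>x. \<bar>f x - fW x\<bar> \<partial>std_gaussian) \<le> 2 * \<kappa>"
proof -
  have f_meas [measurable]: "f \<in> borel_measurable borel"
    using assms(2) by (intro borel_measurable_continuous_onI lipschitz_on_continuous_on)
  have f_bound: "\<bar>f x\<bar> \<le> 1" and g_bound: "\<bar>g x\<bar> \<le> 1" for x
    using assms(3,5) by (auto simp: abs_le_iff)
  obtain c where close: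
      "(\<integral>x. \<bar>g x - f (orth_proj W x - c)\<bar> \<partial>std_gaussian) \<le> (\<integral>x. \<bar>f x - g x\<bar> \<partial>std_gaussian)"
    using exists_orth_proj_shift_close[OF assms(1,6) f_meas assms(7) f_bound g_bound] by blast
  define fW where "fW x = f (orth_proj W x - c)" for x
  have fW_bound: "\<bar>fW x\<bar> \<le> 1" for x by (simp add: fW_def f_bound)
  have [measurable]: "fW \<in> borel_measurable borel"
    using assms(1) unfolding fW_def[abs_def] by measurable
  have "C-lipschitz_on UNIV fW"
    unfolding fW_def[abs_def] using assms(1,2) by (rule lipschitz_on_orth_proj_shift)
  moreover have "is_junta W fW"
    unfolding is_junta_def fW_def by (rule exI[of _ "\<lambda>p. f (p - c)"]) simp
  moreover have "\<forall>x. fW x \<in> {-1..1}" using fW_bound by (simp add: abs_le_iff)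
  moreover have "(\<integral>x. \<bar>f x - fW x\<bar> \<partial>std_gaussian)
      \<le> (\<integral>x. \<bar>f x - g x\<bar> \<partial>std_gaussian) + (\<integral>x. \<bar>g x - fW x\<bar> \<partial>std_gaussian)"
    using f_bound g_bound fW_bound assms(7)
    by (intro integral_abs_diff_triangle integrable_std_gaussian_abs_diff) auto
  ultimately show ?thesis using close assms(8) unfolding fW_def by fastforce
qed

end
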